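(* Let $a$ be a positive integer with $\sigma(a)\neq 2a$, and let $b,c$ be coprime integers with $c>0$ and $\dfrac{b}{c}=\dfrac{a}{2a-\sigma(a)}$. Let $f$ be a positive integer coprime to $a$, and let $g,h$ be positive integers with $gh=\sigma(f)$. Put $e=bf-bgh+cgh$ and assume $e\neq 0$. Let $x,y$ be positive integers such that $p=hx-1$, $q=gy-1$, $r=xy-1$ are primes, $p\neq q$, none of $p,q,r$ divides $a$, and $\gcd(f,r)=1$. If $$(ex-bg)(ey-bh)=b^2gh+be(f-1),$$ then $apq$ and $afr$ are amicable numbers.
   Context: For a positive integer $N$, $\sigma(N)$ denotes the sum of all positive divisors of $N$. Positive integers $M,N$ are amicable if $\sigma(M)-M=N$ and $\sigma(N)-N=M$. *)

theory Defs
  imports "HOL-Number_Theory.Number_Theory"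
begin

definition sigma :: "nat \<Rightarrow> nat" where
  "sigma N = (\<Sum>d\<in>{d. d dvd N}. d)"

definition amicable :: "nat \<Rightarrow> nat \<Rightarrow> bool" where
  "amicable M N \<longleftrightarrow> M > 0 \<and> N > 0 \<and> int (sigma M) - int M = int N \<and> int (sigma N) - int N = int M"

end

theory Submission
  imports Defs
begin

(* With p = hx - 1, q = gy - 1, r = xy - 1 and sigma multiplicative, sigma(apq) = sigma(a) hx gy
   and sigma(afr) = sigma(a) gh xy coincide, so it remains to show that this value is apq + afr.
   As e <> 0, the quadratic relation is equivalent to e xy = b (hx + gy + f - 1); together with
   b sigma(a) = (2b - c) a, both b sigma(a) gh xy and b a (pq + fr) reduce to a xy (2b - c) gh. *)

lemma divisor_mult_injective:
  fixes m n u v u' v' :: nat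
  assumes "coprime m n" and "u dvd m" "v dvd n" "u' dvd m" "v' dvd n" and "u * v = u' * v'"
  shows "u = u'" and "v = v'"
proof -
  have recover: "gcd (s * t) m = s \<and> gcd (s * t) n = t" if "s dvd m" "t dvd n" for s t
  proof -
    have "coprime m t" "coprime n s"
      using assms(1) that coprime_divisors coprime_commute by (metis dvd_refl)+
    then show ?thesis
      using that gcd_mult_left_right_cancel[of m t s] gcd_mult_left_left_cancel[of n s t]
      by (simp add: gcd_nat.absorb1)
  qed
  show "u = u'" "v = v'"
    using recover[OF assms(2,3)] recover[OF assms(4,5)] assms(6) by metis+
qed

lemma sigma_mult:
  fixes m n :: nat
  assumes "coprime m n"
  shows "sigma (m * n) = sigma m * sigma n"
proof -
  let ?D = "\<lambda>k::nat. {d. d dvd k}"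
  let ?mult = "\<lambda>(d1, d2). d1 * d2 :: nat"
  have divisors_mult: "?D (m * n) = ?mult ` (?D m \<times> ?D n)"
  proof
    show "?D (m * n) \<subseteq> ?mult ` (?D m \<times> ?D n)"
    proof
      fix d assume "d \<in> ?D (m * n)"
      then have "d dvd m * n" by simp
      then obtain u v where "d = u * v" "u dvd m" "v dvd n"
        by (rule dvd_productE)
      then show "d \<in> ?mult ` (?D m \<times> ?D n)" by force
    qed
  qed (auto intro: mult_dvd_mono)
  have "inj_on ?mult (?D m \<times> ?D n)"
  proof (rule inj_onI, clarify)
    fix u v u' v' :: nat
    assume "u dvd m" "v dvd n" "u' dvd m" "v' dvd n" "u * v = u' * v'"
    then show "u = u' \<and> v = v'"
      using divisor_mult_injective[OF assms] by blast
  qed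
  then have "sigma (m * n) = (\<Sum>(d1, d2)\<in>?D m \<times> ?D n. d1 * d2)"
    unfolding sigma_def divisors_mult by (rule sum.reindex[unfolded comp_def])
  also have "\<dots> = sigma m * sigma n"
    by (simp add: sigma_def sum_product sum.cartesian_product)
  finally show ?thesis .
qed

lemma sigma_prime:
  assumes "prime (p::nat)"
  shows "sigma p = p + 1"
proof -
  have "{d. d dvd p} = {1, p}" "p \<noteq> 1"
    using assms prime_nat_iff by auto
  then show ?thesis by (simp add: sigma_def)
qed

lemma sigma_mult_prime:
  fixes n p :: nat
  assumes "prime p" "\<not> p dvd n"
  shows "sigma (n * p) = sigma n * (p + 1)"
proof -
  have "coprime n p"
    using assms prime_imp_coprime coprime_commute by blast
  then have "sigma (n * p) = sigma n * sigma p"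
    by (rule sigma_mult)
  then show ?thesis
    using assms(1) sigma_prime by simp
qed

lemma sigma_mult_two_primes:
  fixes a p q :: nat
  assumes "prime p" "prime q" "p \<noteq> q" "\<not> p dvd a" "\<not> q dvd a"
  shows "sigma (a * p * q) = sigma a * (p + 1) * (q + 1)"
proof -
  have "\<not> q dvd a * p"
    using assms by (metis prime_dvd_mult_iff primes_dvd_imp_eq)
  then show ?thesis
    using assms sigma_mult_prime[of q "a * p"] sigma_mult_prime[of p a] by simp
qed

lemma sigma_mult_coprime_prime:
  fixes a f r :: nat
  assumes "coprime f a" "prime r" "\<not> r dvd a" "coprime f r"
  shows "sigma (a * f * r) = sigma a * sigma f * (r + 1)"
proof -
  have "\<not> r dvd f"
    using assms(2,4) coprime_absorb_left[of r f] not_prime_unit coprime_commute by blast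
  then have "\<not> r dvd a * f"
    using assms(2,3) prime_dvd_mult_iff by blast
  then show ?thesis
    using assms sigma_mult_prime[of r "a * f"] sigma_mult[of a f] by (simp add: coprime_commute)
qed

lemma amicableI:
  assumes "M > 0" "N > 0" "sigma M = M + N" "sigma N = M + N"
  shows "amicable M N"
  using assms by (simp add: amicable_def)

lemma quadratic_relation_iff_linear:
  fixes b e f g h x y :: "'a::idom"
  assumes "e \<noteq> 0"
  shows "(e * x - b * g) * (e * y - b * h) = b^2 * g * h + b * e * (f - 1)
     \<longleftrightarrow> e * x * y = b * (h * x + g * y + f - 1)"
proof -
  have "(e * x - b * g) * (e * y - b * h) - (b^2 * g * h + b * e * (f - 1))
      = e * (e * x * y - b * (h * x + g * y + f - 1))"
    by (simp add: algebra_simps power2_eq_square)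
  then show ?thesis
    using assms by (metis eq_iff_diff_eq_0 mult_eq_0_iff)
qed

lemma amicable_balance:
  fixes a s b c f g h x y :: "'a::idom"
  assumes "b * (2 * a - s) = c * a" and "b \<noteq> 0"
    and "(b * f - b * g * h + c * g * h) * x * y = b * (h * x + g * y + f - 1)"
  shows "s * (g * h) * (x * y) = a * ((h * x - 1) * (g * y - 1) + f * (x * y - 1))"
proof -
  have "b * (s * (g * h) * (x * y)) = (2 * b - c) * a * (g * h) * (x * y)"
    using assms(1) by (simp add: algebra_simps)
  also have "\<dots> = a * (b * g * h * x * y + b * f * x * y - (b * f - b * g * h + c * g * h) * x * y)"
    by (simp add: algebra_simps)
  also have "\<dots> = b * (a * ((h * x - 1) * (g * y - 1) + f * (x * y - 1)))"
    unfolding assms(3) by (simp add: algebra_simps)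
  finally show ?thesis
    using assms(2) by simp
qed

lemma amicable_balance_nat:
  fixes a s f g h x y p q r :: nat and b c e :: int
  assumes "a > 0" "s \<noteq> 2 * a" "c > 0"
    and "(of_int b / of_int c :: rat) = of_nat a / (2 * of_nat a - of_nat s)"
    and "e = b * int f - b * int g * int h + c * int g * int h" "e \<noteq> 0"
    and "(e * int x - b * int g) * (e * int y - b * int h) = b^2 * int g * int h + b * e * (int f - 1)"
    and "p + 1 = h * x" "q + 1 = g * y" "r + 1 = x * y"
  shows "s * (g * h) * (x * y) = a * p * q + a * f * r"
proof -
  have "(2 * of_nat a - of_nat s :: rat) \<noteq> 0"
    using assms(2) by (metis eq_iff_diff_eq_0 of_nat_eq_iff of_nat_mult of_nat_numeral)
  then have "(of_int (b * (2 * int a - int s)) :: rat) = of_int (c * int a)"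
    using assms(3,4) frac_eq_eq[of "of_int c" "2 * of_nat a - of_nat s :: rat"]
    by (simp add: mult.commute)
  then have "b * (2 * int a - int s) = c * int a"
    by (simp only: of_int_eq_iff)
  moreover have "b \<noteq> 0"
    using calculation assms(1,3) by auto
  moreover have "(b * int f - b * int g * int h + c * int g * int h) * int x * int y
      = b * (int h * int x + int g * int y + int f - 1)"
    using assms(7) quadratic_relation_iff_linear[OF assms(6)] unfolding assms(5) by simp
  ultimately have "int s * (int g * int h) * (int x * int y)
      = int a * ((int h * int x - 1) * (int g * int y - 1) + int f * (int x * int y - 1))"
    by (rule amicable_balance)
  moreover have "int h * int x - 1 = int p" "int g * int y - 1 = int q" "int x * int y - 1 = int r"
    using assms(8-10) by (simp_all flip: of_nat_mult add: algebra_simps)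
  ultimately have "int (s * (g * h) * (x * y)) = int (a * p * q + a * f * r)"
    by (simp only: of_nat_mult of_nat_add distrib_left mult_ac)
  then show ?thesis
    by (simp only: of_nat_eq_iff)
qed

theorem mainTheorem9:
  fixes a f g h x y :: nat and b c :: int
  assumes "a > 0" and "sigma a \<noteq> 2 * a"
    and "coprime b c" and "c > 0"
    and "(of_int b / of_int c :: rat) = of_nat a / (2 * of_nat a - of_nat (sigma a))"
    and "f > 0" and "coprime f a"
    and "g > 0" and "h > 0" and "g * h = sigma f"
    and "b * int f - b * int g * int h + c * int g * int h \<noteq> 0"
    and "x > 0" and "y > 0"
    and "prime (h * x - 1)" and "prime (g * y - 1)" and "prime (x * y - 1)"
    and "h * x - 1 \<noteq> g * y - 1"
    and "\<not> (h * x - 1) dvd a" and "\<not> (g * y - 1) dvd a" and "\<not> (x * y - 1) dvd a"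
    and "gcd f (x * y - 1) = 1"
    and "let e = b * int f - b * int g * int h + c * int g * int h in
         (e * int x - b * int g) * (e * int y - b * int h) = b^2 * int g * int h + b * e * (int f - 1)"
  shows "amicable (a * (h * x - 1) * (g * y - 1)) (a * f * (x * y - 1))"
proof -
  define p q r where "p = h * x - 1" and "q = g * y - 1" and "r = x * y - 1"
  have succ: "p + 1 = h * x" "q + 1 = g * y" "r + 1 = x * y"
    using assms(8,9,12,13) by (simp_all add: p_def q_def r_def)
  have primes: "prime p" "prime q" "prime r" "p \<noteq> q"
    and coprimes: "\<not> p dvd a" "\<not> q dvd a" "\<not> r dvd a" "coprime f r"
    using assms(14-21) unfolding p_def q_def r_def coprime_iff_gcd_eq_1 by blast+
  have balance: "sigma a * (g * h) * (x * y) = a * p * q + a * f * r"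
    using amicable_balance_nat[OF assms(1,2,4,5) refl assms(11) _ succ] assms(22)
    by (simp add: Let_def)
  have "sigma (a * p * q) = sigma a * (p + 1) * (q + 1)"
    by (rule sigma_mult_two_primes[OF primes(1,2,4) coprimes(1,2)])
  also have "\<dots> = a * p * q + a * f * r"
    unfolding succ balance[symmetric] by (simp only: mult_ac)
  finally have sigma_apq: "sigma (a * p * q) = a * p * q + a * f * r" .
  have "sigma (a * f * r) = sigma a * sigma f * (r + 1)"
    by (rule sigma_mult_coprime_prime[OF assms(7) primes(3) coprimes(3,4)])
  also have "\<dots> = a * p * q + a * f * r"
    unfolding assms(10)[symmetric] succ(3) by (rule balance)
  finally have sigma_afr: "sigma (a * f * r) = a * p * q + a * f * r" .
  have "a * p * q > 0" "a * f * r > 0"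
    using assms(1,6) primes prime_gt_0_nat by simp_all
  with sigma_apq sigma_afr show ?thesis
    unfolding p_def q_def r_def by (intro amicableI)
qed

end
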